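(* For any matroid $M$ (not necessarily realizable) on $E=\{0,\dots,n\}$, the tuples $([\mathcal S_M]_\sigma)_\sigma$ and $([\mathcal Q_M]_\sigma)_\sigma$ of Laurent polynomials defined by $[\mathcal S_M]_\sigma=\sum_{i\in B_\sigma(M)}T_i^{-1}$ and $[\mathcal Q_M]_\sigma=\sum_{i\notin B_\sigma(M)}T_i^{-1}$ are well-defined elements of $K_T^0(X_E)$ (i.e. lie in the image of the restriction map), and $[\mathcal S_M]+[\mathcal Q_M]=[\underline{\mathbb C}^E_{\mathrm{inv}}]$.
   Context: $T=(\mathbb C^* )^E$; $X_E$ is the permutohedral variety (toric variety of the fan in $\mathbb R^E/\mathbb R\mathbf 1$ with cones $\operatorname{Cone}(\overline{\mathbf e}_{S_1},\dots,\overline{\mathbf e}_{S_k})$ for chains of nonempty proper subsets), whose $T$-fixed points $p_\sigma$ are indexed by permutations $\sigma$ of $E$. The restriction map $K_T^0(X_E)\to\prod_{\sigma}\mathbb Z[T_0^{\pm1},\dots,T_n^{\pm1}]$ is injective, with image the tuples $(f_\sigma)$ such that $f_\sigma\equiv f_{\sigma'}\bmod(1-T_{\sigma(i+1)}/T_{\sigma(i)})$ whenever $\sigma'=\sigma\circ(i,i+1)$. $B_\sigma(M)$ is the lexicographically first basis of $M$ for the order $\sigma(0)\prec\cdots\prec\sigma(n)$. $\underline{\mathbb C}^E_{\mathrm{inv}}=X_E\times\mathbb C^E$ with $T$ acting by $t\cdot x=(t_i^{-1}x_i)$; its class restricts to $\sum_{i\in E}T_i^{-1}$ at every $p_\sigma$.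 *)

theory Defs
  imports Main "HOL-Library.Poly_Mapping" "HOL-Combinatorics.Transposition"
    "HOL-Combinatorics.Permutations"
begin

text \<open>Laurent polynomials Z[T_0^{+-1},...,T_n^{+-1}] as the group ring of the
  free abelian group of exponent vectors (finitely supported nat => int).\<close>
type_synonym laurent = "(nat \<Rightarrow>\<^sub>0 int) \<Rightarrow>\<^sub>0 int"

definition Tvar :: "nat \<Rightarrow> laurent" where
  "Tvar i = Poly_Mapping.single (Poly_Mapping.single i 1) 1"

definition Tinv :: "nat \<Rightarrow> laurent" where
  "Tinv i = Poly_Mapping.single (Poly_Mapping.single i (-1)) 1"

text \<open>A matroid on ground set E, given by its set of bases (basis exchange axiom).\<close>
definition matroid :: "'a set \<Rightarrow> 'a set set \<Rightarrow> bool" where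
  "matroid E M \<longleftrightarrow> finite E \<and> M \<subseteq> Pow E \<and> M \<noteq> {} \<and>
     (\<forall>B1\<in>M. \<forall>B2\<in>M. \<forall>x\<in>B1 - B2. \<exists>y\<in>B2 - B1. insert y (B1 - {x}) \<in> M)"

definition sigma_min :: "(nat \<Rightarrow> nat) \<Rightarrow> nat set \<Rightarrow> nat" where
  "sigma_min \<sigma> S = \<sigma> (LEAST k. \<sigma> k \<in> S)"

definition lex_first_basis :: "(nat \<Rightarrow> nat) \<Rightarrow> nat set set \<Rightarrow> nat set" where
  "lex_first_basis \<sigma> M = (THE B. B \<in> M \<and>
     (\<forall>B'\<in>M. B' \<noteq> B \<longrightarrow> sigma_min \<sigma> ((B - B') \<union> (B' - B)) \<in> B))"

text \<open>Image of the restriction map K_T^0(X_E) -> prod_sigma Z[T^{+-1}], E = {0..n}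
  (GKM-type description).\<close>
definition KT0 :: "nat \<Rightarrow> ((nat \<Rightarrow> nat) \<Rightarrow> laurent) set" where
  "KT0 n = {f. \<forall>\<sigma> i. \<sigma> permutes {0..n} \<and> i < n \<longrightarrow>
      (1 - Tvar (\<sigma> (i+1)) * Tinv (\<sigma> i)) dvd (f \<sigma> - f (\<sigma> \<circ> Transposition.transpose i (i+1)))}"

definition S_class :: "nat \<Rightarrow> nat set set \<Rightarrow> (nat \<Rightarrow> nat) \<Rightarrow> laurent" where
  "S_class n M \<sigma> = (\<Sum>i\<in>lex_first_basis \<sigma> M. Tinv i)"

definition Q_class :: "nat \<Rightarrow> nat set set \<Rightarrow> (nat \<Rightarrow> nat) \<Rightarrow> laurent" where
  "Q_class n M \<sigma> = (\<Sum>i\<in>{0..n} - lex_first_basis \<sigma> M. Tinv i)"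

definition Cinv_class :: "nat \<Rightarrow> (nat \<Rightarrow> nat) \<Rightarrow> laurent" where
  "Cinv_class n \<sigma> = (\<Sum>i\<in>{0..n}. Tinv i)"

end

theory Submission
  imports Defs
begin

text \<open>
  For a bijection \<open>\<sigma>\<close>, the lexicographically first basis is the basis of least weight
  \<open>\<Sum>x\<in>B. inv \<sigma> x\<close>, and a basis of least weight satisfies Gale's condition: every
  initial segment \<open>{x. inv \<sigma> x < k}\<close> of the order contains at least as many of its elements
  as of any other basis. Swapping \<open>\<sigma> i\<close> and \<open>\<sigma> (i + 1)\<close> changes only the initial segment
  with \<open>k = i + 1\<close>, so the lexicographically first bases for \<open>\<sigma>\<close> and for \<open>\<sigma>\<close> composed
  with the transposition of \<open>i\<close> and \<open>i + 1\<close> meet every other initial segment in equally many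
  elements, hence agree outside \<open>{\<sigma> i, \<sigma> (i + 1)}\<close>. Having the same size, their sums of
  inverse variables then agree modulo \<open>1 - Tvar (\<sigma> (i + 1)) * Tinv (\<sigma> i)\<close>, because
  \<open>Tinv (\<sigma> i)\<close> and \<open>Tinv (\<sigma> (i + 1))\<close> do. The claims about \<open>Q_class\<close> follow from
  \<open>Q_class = Cinv_class - S_class\<close>, where \<open>Cinv_class\<close> does not depend on \<open>\<sigma>\<close>.
\<close>

lemma matroid_basis_subset:
  assumes "matroid V M" "B \<in> M"
  shows "B \<subseteq> V"
  using assms unfolding matroid_def by auto

lemma matroid_basis_finite:
  assumes "matroid V M" "B \<in> M"
  shows "finite B"
  using assms matroid_basis_subset finite_subset unfolding matroid_def by metis

lemma matroid_exchange:
  assumes "matroid V M" "B1 \<in> M" "B2 \<in> M" "x \<in> B1 - B2"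
  obtains y where "y \<in> B2 - B1" "insert y (B1 - {x}) \<in> M"
  using assms unfolding matroid_def by metis

lemma matroid_exchange_closer:
  assumes "matroid V M" "B1 \<in> M" "B2 \<in> M" "x \<in> B1 - B2"
  obtains y where "y \<in> B2 - B1" "insert y (B1 - {x}) \<in> M"
    and "card (insert y (B1 - {x}) - B2) < card (B1 - B2)"
proof -
  obtain y where y: "y \<in> B2 - B1" "insert y (B1 - {x}) \<in> M"
    using matroid_exchange[OF assms] .
  have "insert y (B1 - {x}) - B2 = (B1 - B2) - {x}"
    using y(1) by blast
  moreover have "card ((B1 - B2) - {x}) < card (B1 - B2)"
    using assms(4) matroid_basis_finite[OF assms(1,2)] by (meson card_Diff1_less finite_Diff)
  ultimately show thesis
    using that y by simp
qed

lemma matroid_basis_card_le: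
  assumes "matroid V M" "B1 \<in> M" "B2 \<in> M"
  shows "card B1 \<le> card B2"
  using assms(2)
proof (induction "card (B1 - B2)" arbitrary: B1 rule: less_induct)
  case less
  show ?case
  proof (cases "B1 \<subseteq> B2")
    case True
    then show ?thesis
      using matroid_basis_finite[OF assms(1,3)] by (rule card_mono[rotated])
  next
    case False
    then obtain x where x: "x \<in> B1 - B2"
      by blast
    obtain y where y: "y \<in> B2 - B1" "insert y (B1 - {x}) \<in> M"
      and closer: "card (insert y (B1 - {x}) - B2) < card (B1 - B2)"
      using matroid_exchange_closer[OF assms(1) less.prems assms(3) x] .
    have fin: "finite B1"
      using matroid_basis_finite[OF assms(1) less.prems] .
    have "card (insert y (B1 - {x})) = Suc (card (B1 - {x}))"
      using fin y(1) by simp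
    also have "\<dots> = card B1"
      using card_Suc_Diff1[OF fin] x by blast
    finally have "card (insert y (B1 - {x})) = card B1" .
    then show ?thesis
      using less.hyps[OF closer y(2)] by simp
  qed
qed

lemma matroid_basis_card_eq:
  "matroid V M \<Longrightarrow> B1 \<in> M \<Longrightarrow> B2 \<in> M \<Longrightarrow> card B1 = card B2"
  using matroid_basis_card_le le_antisym by metis

definition min_weight_basis :: "('a \<Rightarrow> nat) \<Rightarrow> 'a set set \<Rightarrow> 'a set \<Rightarrow> bool" where
  "min_weight_basis r M B \<longleftrightarrow> B \<in> M \<and> (\<forall>E\<in>M. (\<Sum>x\<in>B. r x) \<le> (\<Sum>x\<in>E. r x))"

lemma min_weight_basis_exists: "M \<noteq> {} \<Longrightarrow> \<exists>B. min_weight_basis r M B"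
  unfolding min_weight_basis_def using ex_has_least_nat[of "\<lambda>B. B \<in> M"] by blast

lemma min_weight_basis_exchange_le:
  assumes "matroid V M" "min_weight_basis r M B" "E \<in> M" "x \<in> B - E"
  obtains y where "y \<in> E - B" "r x \<le> r y"
proof -
  have B: "B \<in> M" "finite B"
    using assms(1,2) matroid_basis_finite unfolding min_weight_basis_def by blast+
  obtain y where y: "y \<in> E - B" "insert y (B - {x}) \<in> M"
    using matroid_exchange[OF assms(1) B(1) assms(3,4)] .
  have "r x + (\<Sum>z\<in>B - {x}. r z) = (\<Sum>z\<in>B. r z)"
    using sum.remove[OF B(2), of x r] assms(4) by simp
  also have "\<dots> \<le> (\<Sum>z\<in>insert y (B - {x}). r z)"
    using assms(2) y(2) unfolding min_weight_basis_def by blast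
  also have "\<dots> = r y + (\<Sum>z\<in>B - {x}. r z)"
    using B(2) y(1) by simp
  finally show thesis
    using that y(1) by simp
qed

lemma card_Int_le_if_diff_subset:
  assumes "finite A" "finite B" "card A = card B" "B - A \<subseteq> P"
  shows "card (A \<inter> P) \<le> card (B \<inter> P)"
proof -
  have "card (B - P) \<le> card (A - P)"
    using assms(1,4) by (intro card_mono) auto
  then show ?thesis
    using assms(3) card_Int_Diff[OF assms(1), of P] card_Int_Diff[OF assms(2), of P] by linarith
qed

lemma min_weight_basis_card_Int_le:
  assumes "matroid V M" "min_weight_basis r M B" "E \<in> M"
  shows "card (E \<inter> {x. r x < k}) \<le> card (B \<inter> {x. r x < k})"
  using assms(3)
proof (induction "card (E - B)" arbitrary: E rule: less_induct)
  case less
  let ?P = "{x. r x < k}"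
  have B: "B \<in> M"
    using assms(2) unfolding min_weight_basis_def by blast
  show ?case
  proof (cases "E - B \<subseteq> ?P")
    case True
    have "B - E \<subseteq> ?P"
    proof
      fix x
      assume "x \<in> B - E"
      then obtain y where "y \<in> E - B" "r x \<le> r y"
        using min_weight_basis_exchange_le[OF assms(1,2) less.prems] by blast
      with True show "x \<in> ?P"
        by auto
    qed
    then show ?thesis
      using card_Int_le_if_diff_subset matroid_basis_finite[OF assms(1)] B less.prems
        matroid_basis_card_eq[OF assms(1) less.prems B] by blast
  next
    case False
    then obtain z where z: "z \<in> E - B" "z \<notin> ?P"
      by blast
    obtain y where E': "insert y (E - {z}) \<in> M"
      and closer: "card (insert y (E - {z}) - B) < card (E - B)"
      using matroid_exchange_closer[OF assms(1) less.prems B z(1)] by blast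
    have "card (E \<inter> ?P) \<le> card (insert y (E - {z}) \<inter> ?P)"
      using z(2) matroid_basis_finite[OF assms(1) E'] by (intro card_mono) auto
    also have "\<dots> \<le> card (B \<inter> ?P)"
      using less.hyps[OF closer E'] .
    finally show ?thesis .
  qed
qed

lemma sublevel_Suc: "inj r \<Longrightarrow> {y. r y < Suc (r x)} = insert x {y. r y < r x}"
  by (auto simp: less_Suc_eq inj_eq)

lemma min_weight_basis_least_diff_mem:
  assumes "matroid V M" "inj r" "min_weight_basis r M B" "E \<in> M"
    and s: "s \<in> (B - E) \<union> (E - B)" and least: "\<forall>t \<in> (B - E) \<union> (E - B). r s \<le> r t"
  shows "s \<in> B"
proof (rule ccontr)
  assume "s \<notin> B"
  with s have "s \<in> E"
    by blast
  let ?L = "{y. r y < r s}"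
  have "y \<notin> (B - E) \<union> (E - B)" if "r y < r s" for y
    using least that leD by blast
  then have "E \<inter> ?L = B \<inter> ?L"
    by blast
  then have "card (B \<inter> insert s ?L) < card (E \<inter> insert s ?L)"
    using \<open>s \<notin> B\<close> \<open>s \<in> E\<close> matroid_basis_finite[OF assms(1,4)]
      matroid_basis_finite[OF assms(1)] assms(3) unfolding min_weight_basis_def
    by (simp add: Int_insert_right card_insert_disjoint)
  with min_weight_basis_card_Int_le[OF assms(1,3,4), of "Suc (r s)"] show False
    unfolding sublevel_Suc[OF assms(2)] by simp
qed

lemma sigma_min_least:
  assumes "bij \<sigma>" "s \<in> S"
  shows "sigma_min \<sigma> S \<in> S" "inv \<sigma> (sigma_min \<sigma> S) \<le> inv \<sigma> s"
proof -
  have "\<sigma> (inv \<sigma> s) \<in> S"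
    using assms by (simp add: bij_is_surj surj_f_inv_f)
  then show "sigma_min \<sigma> S \<in> S"
    unfolding sigma_min_def by (rule LeastI)
  from \<open>\<sigma> (inv \<sigma> s) \<in> S\<close> have "(LEAST k. \<sigma> k \<in> S) \<le> inv \<sigma> s"
    by (rule Least_le)
  then show "inv \<sigma> (sigma_min \<sigma> S) \<le> inv \<sigma> s"
    unfolding sigma_min_def using assms(1) by (simp add: bij_is_inj)
qed

definition lex_first :: "(nat \<Rightarrow> nat) \<Rightarrow> nat set set \<Rightarrow> nat set \<Rightarrow> bool" where
  "lex_first \<sigma> M B \<longleftrightarrow> B \<in> M \<and>
     (\<forall>B'\<in>M. B' \<noteq> B \<longrightarrow> sigma_min \<sigma> ((B - B') \<union> (B' - B)) \<in> B)"

lemma lex_first_basis_eq_The: "lex_first_basis \<sigma> M = (THE B. lex_first \<sigma> M B)"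
  unfolding lex_first_basis_def lex_first_def ..

lemma lex_first_unique:
  assumes "bij \<sigma>" "lex_first \<sigma> M B1" "lex_first \<sigma> M B2"
  shows "B1 = B2"
proof (rule ccontr)
  assume "B1 \<noteq> B2"
  have "B1 \<in> M" "B2 \<in> M"
    using assms(2,3) unfolding lex_first_def by simp_all
  define S where "S = (B1 - B2) \<union> (B2 - B1)"
  obtain s where "s \<in> S"
    using \<open>B1 \<noteq> B2\<close> unfolding S_def by blast
  then have "sigma_min \<sigma> S \<in> S"
    by (rule sigma_min_least(1)[OF assms(1)])
  moreover have "sigma_min \<sigma> S \<in> B1"
    using assms(2) \<open>B2 \<in> M\<close> \<open>B1 \<noteq> B2\<close> unfolding lex_first_def S_def by simp
  moreover have "sigma_min \<sigma> S \<in> B2"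
  proof -
    have "S = (B2 - B1) \<union> (B1 - B2)"
      unfolding S_def by blast
    then show ?thesis
      using assms(3) \<open>B1 \<in> M\<close> \<open>B1 \<noteq> B2\<close> unfolding lex_first_def by simp
  qed
  ultimately show False
    unfolding S_def by blast
qed

lemma min_weight_basis_lex_first:
  assumes "matroid V M" "bij \<sigma>" "min_weight_basis (inv \<sigma>) M B"
  shows "lex_first \<sigma> M B"
  unfolding lex_first_def
proof (intro conjI ballI impI)
  show "B \<in> M"
    using assms(3) unfolding min_weight_basis_def by blast
  fix E
  assume "E \<in> M" "E \<noteq> B"
  then obtain s where s: "s \<in> (B - E) \<union> (E - B)"
    by blast
  have "inj (inv \<sigma>)"
    using assms(2) by (simp add: bij_imp_bij_inv bij_is_inj)
  moreover have "sigma_min \<sigma> ((B - E) \<union> (E - B)) \<in> (B - E) \<union> (E - B)"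
    by (rule sigma_min_least(1)[OF assms(2) s])
  moreover have "\<forall>t \<in> (B - E) \<union> (E - B). inv \<sigma> (sigma_min \<sigma> ((B - E) \<union> (E - B))) \<le> inv \<sigma> t"
    by (intro ballI sigma_min_least(2)[OF assms(2)])
  ultimately show "sigma_min \<sigma> ((B - E) \<union> (E - B)) \<in> B"
    by (rule min_weight_basis_least_diff_mem[OF assms(1) _ assms(3) \<open>E \<in> M\<close>])
qed

lemma lex_first_basis_min_weight:
  assumes "matroid V M" "bij \<sigma>"
  shows "min_weight_basis (inv \<sigma>) M (lex_first_basis \<sigma> M)"
proof -
  have "M \<noteq> {}"
    using assms(1) unfolding matroid_def by simp
  then obtain B where B: "min_weight_basis (inv \<sigma>) M B"
    using min_weight_basis_exists by blast
  have L: "lex_first \<sigma> M B"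
    using min_weight_basis_lex_first[OF assms B] .
  have "lex_first_basis \<sigma> M = B"
    unfolding lex_first_basis_eq_The using L lex_first_unique[OF assms(2) _ L] by (rule the_equality)
  with B show ?thesis
    by simp
qed

lemma lex_first_basis_mem: "matroid V M \<Longrightarrow> bij \<sigma> \<Longrightarrow> lex_first_basis \<sigma> M \<in> M"
  using lex_first_basis_min_weight unfolding min_weight_basis_def by blast

lemma transpose_Suc_less_iff:
  "k \<noteq> Suc i \<Longrightarrow> Transposition.transpose i (Suc i) p < k \<longleftrightarrow> p < k"
  unfolding transpose_def by (cases "p = i"; cases "p = Suc i") auto

lemma mem_iff_if_card_Int_insert_eq:
  assumes "finite A" "finite B" "x \<notin> L" "card (A \<inter> L) = card (B \<inter> L)"
    and "card (A \<inter> insert x L) = card (B \<inter> insert x L)"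
  shows "x \<in> A \<longleftrightarrow> x \<in> B"
  using assms by (auto simp: Int_insert_right card_insert_disjoint split: if_splits)

lemma lex_first_basis_transpose:
  assumes "matroid V M" "bij \<sigma>"
  shows "lex_first_basis \<sigma> M - {\<sigma> i, \<sigma> (i + 1)} =
         lex_first_basis (\<sigma> \<circ> Transposition.transpose i (i + 1)) M - {\<sigma> i, \<sigma> (i + 1)}"
proof -
  define \<tau> where "\<tau> = Transposition.transpose i (i + 1)"
  define B where "B = lex_first_basis \<sigma> M"
  define B' where "B' = lex_first_basis (\<sigma> \<circ> \<tau>) M"
  have "bij (\<sigma> \<circ> \<tau>)"
    using assms(2) unfolding \<tau>_def by (simp add: bij_comp)
  then have B: "min_weight_basis (inv \<sigma>) M B" and B': "min_weight_basis (inv (\<sigma> \<circ> \<tau>)) M B'"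
    using lex_first_basis_min_weight[OF assms(1)] assms(2) unfolding B_def B'_def by blast+
  have mem: "B \<in> M" "B' \<in> M"
    using B B' unfolding min_weight_basis_def by blast+
  have "{x. inv (\<sigma> \<circ> \<tau>) x < k} = {x. inv \<sigma> x < k}" if "k \<noteq> i + 1" for k
    using assms(2) that by (simp add: \<tau>_def o_inv_distrib transpose_Suc_less_iff)
  then have card_eq: "card (B \<inter> {x. inv \<sigma> x < k}) = card (B' \<inter> {x. inv \<sigma> x < k})"
    if "k \<noteq> i + 1" for k
    using min_weight_basis_card_Int_le[OF assms(1) B mem(2), of k]
      min_weight_basis_card_Int_le[OF assms(1) B' mem(1), of k] that by simp
  have "x \<in> B \<longleftrightarrow> x \<in> B'" if "x \<notin> {\<sigma> i, \<sigma> (i + 1)}" for x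
  proof -
    define k where "k = inv \<sigma> x"
    have "x = \<sigma> k"
      using assms(2) unfolding k_def by (simp add: bij_is_surj surj_f_inv_f)
    with that have "k \<noteq> i + 1" "Suc k \<noteq> i + 1"
      by auto
    moreover have "{y. inv \<sigma> y < Suc k} = insert x {y. inv \<sigma> y < k}"
      unfolding k_def using bij_is_inj[OF bij_imp_bij_inv[OF assms(2)]] by (rule sublevel_Suc)
    ultimately show ?thesis
      using card_eq[of k] card_eq[of "Suc k"]
      by (intro mem_iff_if_card_Int_insert_eq matroid_basis_finite[OF assms(1)] mem) (simp_all add: k_def)
  qed
  then show ?thesis
    unfolding B_def B'_def \<tau>_def by blast
qed

lemma dvd_sum_diff_if_card_eq:
  fixes f :: "'a \<Rightarrow> 'b::comm_ring_1"
  assumes "finite A" "finite B" "card A = card B"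
    and "\<And>x. x \<in> (A - B) \<union> (B - A) \<Longrightarrow> d dvd (f x - c)"
  shows "d dvd (sum f A - sum f B)"
proof -
  have "card (A - B) = card (B - A)"
    using assms(1-3) by (simp add: card_Diff_subset_Int Int_commute)
  moreover have "sum f A - sum f B = sum f (A - B) - sum f (B - A)"
    using sum.Int_Diff[OF assms(1), of f B] sum.Int_Diff[OF assms(2), of f A]
    by (simp add: Int_commute)
  ultimately have "sum f A - sum f B = (\<Sum>x\<in>A - B. f x - c) - (\<Sum>x\<in>B - A. f x - c)"
    by (simp add: sum_subtractf)
  moreover have "d dvd (\<Sum>x\<in>A - B. f x - c)" "d dvd (\<Sum>x\<in>B - A. f x - c)"
    by (rule dvd_sum, rule assms(4), blast)+
  then have "d dvd (\<Sum>x\<in>A - B. f x - c) - (\<Sum>x\<in>B - A. f x - c)"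
    by (rule dvd_diff)
  ultimately show ?thesis
    by simp
qed

lemma Tvar_mult_Tinv: "Tvar i * Tinv i = 1"
  unfolding Tvar_def Tinv_def by (simp add: mult_single single_add[symmetric])

lemma Tinv_diff_dvd: "(1 - Tvar b * Tinv a) dvd (Tinv a - Tinv b)"
proof -
  have "Tinv a - Tinv b = (1 - Tvar b * Tinv a) * (- Tinv b)"
    using Tvar_mult_Tinv[of b] by (simp add: algebra_simps)
  then show ?thesis
    by simp
qed

lemma S_class_transpose_diff_dvd:
  assumes "matroid V M" "bij \<sigma>"
  shows "(1 - Tvar (\<sigma> (i + 1)) * Tinv (\<sigma> i)) dvd
           (S_class n M \<sigma> - S_class n M (\<sigma> \<circ> Transposition.transpose i (i + 1)))"
proof -
  let ?\<sigma>' = "\<sigma> \<circ> Transposition.transpose i (i + 1)"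
  have "bij ?\<sigma>'"
    using assms(2) by (simp add: bij_comp)
  then have mem: "lex_first_basis \<sigma> M \<in> M" "lex_first_basis ?\<sigma>' M \<in> M"
    using lex_first_basis_mem[OF assms(1)] assms(2) by blast+
  have "(1 - Tvar (\<sigma> (i + 1)) * Tinv (\<sigma> i)) dvd (Tinv x - Tinv (\<sigma> (i + 1)))"
    if "x \<in> (lex_first_basis \<sigma> M - lex_first_basis ?\<sigma>' M) \<union>
              (lex_first_basis ?\<sigma>' M - lex_first_basis \<sigma> M)" for x
  proof -
    have "x = \<sigma> i \<or> x = \<sigma> (i + 1)"
      using that lex_first_basis_transpose[OF assms, of i] by blast
    then show ?thesis
      using Tinv_diff_dvd by auto
  qed
  then show ?thesis
    unfolding S_class_def
    by (rule dvd_sum_diff_if_card_eq[OF matroid_basis_finite[OF assms(1) mem(1)]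
          matroid_basis_finite[OF assms(1) mem(2)] matroid_basis_card_eq[OF assms(1) mem]])
qed

lemma S_class_add_Q_class:
  assumes "matroid {0..n} M" "bij \<sigma>"
  shows "S_class n M \<sigma> + Q_class n M \<sigma> = Cinv_class n \<sigma>"
  using sum.subset_diff[of "lex_first_basis \<sigma> M" "{0..n}" Tinv]
    matroid_basis_subset[OF assms(1) lex_first_basis_mem[OF assms]]
  unfolding S_class_def Q_class_def Cinv_class_def by (simp add: add.commute)

lemma Q_class_transpose_diff_dvd:
  assumes "matroid {0..n} M" "bij \<sigma>"
  shows "(1 - Tvar (\<sigma> (i + 1)) * Tinv (\<sigma> i)) dvd
           (Q_class n M \<sigma> - Q_class n M (\<sigma> \<circ> Transposition.transpose i (i + 1)))"
proof -
  let ?\<sigma>' = "\<sigma> \<circ> Transposition.transpose i (i + 1)"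
  have Q: "Q_class n M \<tau> = Cinv_class n \<sigma> - S_class n M \<tau>" if "bij \<tau>" for \<tau>
    using S_class_add_Q_class[OF assms(1) that] unfolding Cinv_class_def
    by (simp add: eq_diff_eq add.commute)
  have eq: "Q_class n M \<sigma> - Q_class n M ?\<sigma>' = S_class n M ?\<sigma>' - S_class n M \<sigma>"
    using Q[OF assms(2)] Q[OF bij_comp[OF bij_transpose assms(2)]] by simp
  show ?thesis
    unfolding eq using S_class_transpose_diff_dvd[OF assms, where i = i and n = n]
    by (metis dvd_minus_iff minus_diff_eq)
qed

theorem proposition3p8:
  fixes n :: nat and M :: "nat set set"
  assumes "matroid {0..n} M"
  shows "S_class n M \<in> KT0 n \<and> Q_class n M \<in> KT0 n \<and>
         (\<forall>\<sigma>. \<sigma> permutes {0..n} \<longrightarrow> S_class n M \<sigma> + Q_class n M \<sigma> = Cinv_class n \<sigma>)"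
proof -
  have "S_class n M \<in> KT0 n" "Q_class n M \<in> KT0 n"
    unfolding KT0_def
    using S_class_transpose_diff_dvd[OF assms] Q_class_transpose_diff_dvd[OF assms]
    by (blast dest: permutes_bij)+
  moreover have "\<forall>\<sigma>. \<sigma> permutes {0..n} \<longrightarrow> S_class n M \<sigma> + Q_class n M \<sigma> = Cinv_class n \<sigma>"
    using S_class_add_Q_class[OF assms] by (blast dest: permutes_bij)
  ultimately show ?thesis
    by blast
qed

end
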